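(* Let $\mathcal{X}$ (contexts), $\mathcal{A}$ (actions) and $\mathcal{Y}\subseteq\mathbb{R}$ (outcomes) be spaces, let $p(x)$ be a context density and $p(y\mid x,a)$ an outcome density. For a behaviour policy $\pi^b(a\mid x)$ and a target policy $\pi^*(a\mid x)$ define the joint densities $p_{\pi^b}(x,a,y)=p(y\mid x,a)\,\pi^b(a\mid x)\,p(x)$ and $p_{\pi^*}(x,a,y)=p(y\mid x,a)\,\pi^*(a\mid x)\,p(x)$, with $Y$-marginals $p_{\pi^b}(y)$ and $p_{\pi^*}(y)$. Assume $\pi^*(a\mid x)>0\Rightarrow \pi^b(a\mid x)>0$ for all $x,a$. Let $w(y)=p_{\pi^*}(y)/p_{\pi^b}(y)$ and $\rho(a,x)=\pi^*(a\mid x)/\pi^b(a\mid x)$. Then $w(y)=\mathbb{E}_{\pi^b}[\rho(A,X)\mid Y=y]$, and $$w=\arg\min_f \mathbb{E}_{\pi^b}\big[(\rho(A,X)-f(Y))^2\big].$$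
   Context: $\mathbb{E}_{\pi^b}$ denotes expectation with $(X,A,Y)\sim p_{\pi^b}(x,a,y)$. The minimum is over measurable functions $f:\mathcal{Y}\to\mathbb{R}$. *)

theory Defs
  imports "HOL-Probability.Probability"
begin

definition joint_meas ::
  "'x measure \<Rightarrow> 'a measure \<Rightarrow> real measure \<Rightarrow> ('x \<Rightarrow> real) \<Rightarrow>
   ('x \<Rightarrow> 'a \<Rightarrow> real \<Rightarrow> real) \<Rightarrow> ('x \<Rightarrow> 'a \<Rightarrow> real) \<Rightarrow> ('x \<times> 'a \<times> real) measure" where
  "joint_meas MX MA MY p py pol =
     density (MX \<Otimes>\<^sub>M (MA \<Otimes>\<^sub>M MY)) (\<lambda>(x, a, y). ennreal (py x a y * pol x a * p x))"

definition y_marg ::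
  "'x measure \<Rightarrow> 'a measure \<Rightarrow> ('x \<Rightarrow> real) \<Rightarrow>
   ('x \<Rightarrow> 'a \<Rightarrow> real \<Rightarrow> real) \<Rightarrow> ('x \<Rightarrow> 'a \<Rightarrow> real) \<Rightarrow> real \<Rightarrow> real" where
  "y_marg MX MA p py pol y =
     enn2real (\<integral>\<^sup>+ xa. ennreal (py (fst xa) (snd xa) y * pol (fst xa) (snd xa) * p (fst xa)) \<partial>(MX \<Otimes>\<^sub>M MA))"

end

theory Submission
  imports Defs
begin

text \<open>Disintegrate the behaviour law along \<open>Y\<close>: given \<open>Y = y\<close>, the pair \<open>(X, A)\<close> has the
  unnormalised density \<open>p(y|x,a) \<pi>\<^sup>b(a|x) p(x)\<close> of total mass \<open>p\<^sub>\<pi>\<^sub>b(y)\<close>, and multiplying it by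
  \<open>\<rho>\<close> gives the corresponding target density (absolute continuity). Hence the conditional mean
  of \<open>\<rho>\<close> in each fibre is \<open>p\<^sub>\<pi>\<^sub>*(y) / p\<^sub>\<pi>\<^sub>b(y) = w(y)\<close>, and the bias-variance identity in each
  fibre, integrated over \<open>y\<close>, gives
  \<open>E[(\<rho> - f(Y))\<^sup>2] = E[(\<rho> - w(Y))\<^sup>2] + \<integral> (w - f)\<^sup>2 p\<^sub>\<pi>\<^sub>b(y) dy\<close>,
  so \<open>w\<close> minimises the risk and every other minimiser of finite risk agrees with it a.s.\<close>

lemma nn_integral_prod3_integrate_last:
  fixes h :: "'b \<times> 'c \<times> 'd \<Rightarrow> ennreal"
  assumes "sigma_finite_measure M1" "sigma_finite_measure M2" "sigma_finite_measure M3"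
    and [measurable]: "h \<in> borel_measurable (M1 \<Otimes>\<^sub>M (M2 \<Otimes>\<^sub>M M3))"
  shows "(\<integral>\<^sup>+\<omega>. h \<omega> \<partial>(M1 \<Otimes>\<^sub>M (M2 \<Otimes>\<^sub>M M3)))
       = (\<integral>\<^sup>+y. \<integral>\<^sup>+xa. h (fst xa, snd xa, y) \<partial>(M1 \<Otimes>\<^sub>M M2) \<partial>M3)"
proof -
  interpret M12: pair_sigma_finite M1 M2 using assms by (simp add: pair_sigma_finite_def)
  interpret M23: pair_sigma_finite M2 M3 using assms by (simp add: pair_sigma_finite_def)
  interpret M12_3: pair_sigma_finite "M1 \<Otimes>\<^sub>M M2" M3
    using assms M12.sigma_finite_measure_axioms by (simp add: pair_sigma_finite_def)
  have "(\<integral>\<^sup>+\<omega>. h \<omega> \<partial>(M1 \<Otimes>\<^sub>M (M2 \<Otimes>\<^sub>M M3))) = (\<integral>\<^sup>+x. \<integral>\<^sup>+a. \<integral>\<^sup>+y. h (x, a, y) \<partial>M3 \<partial>M2 \<partial>M1)"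
    by (subst M23.P.nn_integral_fst[symmetric], simp)
      (intro nn_integral_cong M23.M2.nn_integral_fst[symmetric], measurable)
  also have "\<dots> = (\<integral>\<^sup>+xa. \<integral>\<^sup>+y. h (fst xa, snd xa, y) \<partial>M3 \<partial>(M1 \<Otimes>\<^sub>M M2))"
    using M12.M2.nn_integral_fst[where f="\<lambda>xa. \<integral>\<^sup>+y. h (fst xa, snd xa, y) \<partial>M3"] by simp
  also have "\<dots> = (\<integral>\<^sup>+y. \<integral>\<^sup>+xa. h (fst xa, snd xa, y) \<partial>(M1 \<Otimes>\<^sub>M M2) \<partial>M3)"
    by (rule M12_3.Fubini'[symmetric]) measurable
  finally show ?thesis .
qed

lemma nn_integral_square_deviation:
  fixes r :: "'b \<Rightarrow> real"
  assumes "finite_measure N" and r: "integrable N r"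
    and mean: "c * measure N (space N) = (\<integral>z. r z \<partial>N)"
  shows "(\<integral>\<^sup>+z. ennreal ((r z - d)\<^sup>2) \<partial>N)
       = (\<integral>\<^sup>+z. ennreal ((r z - c)\<^sup>2) \<partial>N) + ennreal ((c - d)\<^sup>2 * measure N (space N))"
proof -
  interpret finite_measure N by fact
  define l where "l z = 2 * (c - d) * r z + ((c - d)\<^sup>2 - 2 * (c - d) * c)" for z
  have expand: "(r z - d)\<^sup>2 = (r z - c)\<^sup>2 + l z" for z
    by (simp add: l_def power2_eq_square algebra_simps)
  have l: "integrable N l"
    unfolding l_def using r by simp
  have l_integral: "(\<integral>z. l z \<partial>N) = (c - d)\<^sup>2 * measure N (space N)"
    unfolding l_def using r by (simp add: mean[symmetric] algebra_simps)
  have [measurable]: "r \<in> borel_measurable N"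
    using r by simp
  show ?thesis
  proof (cases "integrable N (\<lambda>z. (r z - c)\<^sup>2)")
    case True
    then have "integrable N (\<lambda>z. (r z - d)\<^sup>2)"
      unfolding expand using l by simp
    then have "(\<integral>\<^sup>+z. ennreal ((r z - d)\<^sup>2) \<partial>N) = ennreal (\<integral>z. (r z - d)\<^sup>2 \<partial>N)"
      by (simp add: nn_integral_eq_integral)
    also have "\<dots> = ennreal (\<integral>z. (r z - c)\<^sup>2 + l z \<partial>N)"
      by (simp only: expand)
    also have "\<dots> = ennreal ((\<integral>z. (r z - c)\<^sup>2 \<partial>N) + (c - d)\<^sup>2 * measure N (space N))"
      using True l by (simp add: Bochner_Integration.integral_add l_integral)
    also have "\<dots> = ennreal (\<integral>z. (r z - c)\<^sup>2 \<partial>N) + ennreal ((c - d)\<^sup>2 * measure N (space N))"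
      by (rule ennreal_plus) simp_all
    finally show ?thesis
      using True by (simp add: nn_integral_eq_integral)
  next
    case False
    have infinite: "(\<integral>\<^sup>+z. ennreal ((r z - e)\<^sup>2) \<partial>N) = \<infinity>"
      if "\<not> integrable N (\<lambda>z. (r z - e)\<^sup>2)" for e
      using that by (auto intro: integrableI_nonneg simp: top.not_eq_extremum)
    have "(\<lambda>z. (r z - c)\<^sup>2) = (\<lambda>z. (r z - d)\<^sup>2 - l z)"
      by (simp add: expand)
    then have "\<not> integrable N (\<lambda>z. (r z - d)\<^sup>2)"
      using False l by (metis (no_types) Bochner_Integration.integrable_diff)
    then show ?thesis
      using infinite False by simp
  qed
qed

lemma (in finite_measure) real_cond_exp_vimage_charact:
  assumes Y [measurable]: "Y \<in> measurable M N" and g [measurable]: "g \<in> borel_measurable N"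
    and f: "integrable M f" and gY: "integrable M (\<lambda>x. g (Y x))"
    and f_nonneg: "AE x in M. 0 \<le> f x" and g_nonneg: "AE x in M. 0 \<le> g (Y x)"
    and eq: "\<And>B. B \<in> sets N \<Longrightarrow>
      (\<integral>\<^sup>+x. indicator B (Y x) * ennreal (f x) \<partial>M) = (\<integral>\<^sup>+x. indicator B (Y x) * ennreal (g (Y x)) \<partial>M)"
  shows "AE x in M. real_cond_exp M (vimage_algebra (space M) Y N) f x = g (Y x)"
proof -
  define F where "F = vimage_algebra (space M) Y N"
  have Y_space: "Y \<in> space M \<rightarrow> space N"
    using measurable_space[OF Y] by auto
  have sets_F: "sets F = {Y -` B \<inter> space M | B. B \<in> sets N}"
    unfolding F_def by (rule sets_vimage_algebra2[OF Y_space])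
  have "subalgebra M F"
  proof (unfold subalgebra_def, intro conjI subsetI)
    show "space F = space M"
      by (simp add: F_def)
    fix A assume "A \<in> sets F"
    then show "A \<in> sets M"
      unfolding sets_F by auto
  qed
  interpret finite_measure_subalgebra M F
    by unfold_locales fact
  have "AE x in M. real_cond_exp M F f x = g (Y x)"
  proof (rule real_cond_exp_charact[OF _ f gY])
    show "(\<lambda>x. g (Y x)) \<in> borel_measurable F"
      unfolding F_def using measurable_vimage_algebra1[OF Y_space] by measurable
  next
    fix A assume "A \<in> sets F"
    then obtain B where B [measurable]: "B \<in> sets N" and A: "A = Y -` B \<inter> space M"
      unfolding sets_F by blast
    have set_integral_eq: "ennreal (\<integral>x\<in>A. h x \<partial>M) = (\<integral>\<^sup>+x. indicator B (Y x) * ennreal (h x) \<partial>M)"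
      if "integrable M h" "AE x in M. 0 \<le> h x" for h
    proof -
      have "ennreal (\<integral>x\<in>A. h x \<partial>M) = (\<integral>\<^sup>+x\<in>A. ennreal (h x) \<partial>M)"
        using that unfolding A by (subst nn_set_integral_eq_set_integral) auto
      also have "\<dots> = (\<integral>\<^sup>+x. indicator B (Y x) * ennreal (h x) \<partial>M)"
        unfolding A by (intro nn_integral_cong) (simp split: split_indicator)
      finally show ?thesis .
    qed
    have "ennreal (\<integral>x\<in>A. f x \<partial>M) = ennreal (\<integral>x\<in>A. g (Y x) \<partial>M)"
      using eq[OF B] f gY f_nonneg g_nonneg by (simp add: set_integral_eq)
    moreover have "0 \<le> (\<integral>x\<in>A. h x \<partial>M)" if "AE x in M. 0 \<le> h x" for h :: "'a \<Rightarrow> real"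
      unfolding set_lebesgue_integral_def using that
      by (intro integral_nonneg_AE) (auto elim: eventually_mono)
    ultimately show "(\<integral>x\<in>A. f x \<partial>M) = (\<integral>x\<in>A. g (Y x) \<partial>M)"
      using f_nonneg g_nonneg by simp
  qed
  then show ?thesis
    by (simp add: F_def)
qed

locale outcome_model =
  fixes MX :: "'x measure" and MA :: "'a measure" and MY :: "real measure"
    and p :: "'x \<Rightarrow> real" and py :: "'x \<Rightarrow> 'a \<Rightarrow> real \<Rightarrow> real"
  assumes sfX: "sigma_finite_measure MX" and sfA: "sigma_finite_measure MA"
    and sfY: "sigma_finite_measure MY"
    and p_meas: "p \<in> borel_measurable MX"
    and p_nonneg: "\<forall>x\<in>space MX. 0 \<le> p x"
    and p_norm: "(\<integral>\<^sup>+ x. ennreal (p x) \<partial>MX) = 1"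
    and py_meas: "(\<lambda>(x, a, y). py x a y) \<in> borel_measurable (MX \<Otimes>\<^sub>M (MA \<Otimes>\<^sub>M MY))"
    and py_nonneg: "\<forall>x\<in>space MX. \<forall>a\<in>space MA. \<forall>y\<in>space MY. 0 \<le> py x a y"
    and py_norm: "\<forall>x\<in>space MX. \<forall>a\<in>space MA. (\<integral>\<^sup>+ y. ennreal (py x a y) \<partial>MY) = 1"
begin

sublocale XA: pair_sigma_finite MX MA
  using sfX sfA by (simp add: pair_sigma_finite_def)

sublocale XA_Y: pair_sigma_finite "MX \<Otimes>\<^sub>M MA" MY
  using sfY XA.sigma_finite_measure_axioms by (simp add: pair_sigma_finite_def)

lemma measurable_py_outcome:
  assumes "x \<in> space MX" "a \<in> space MA"
  shows "py x a \<in> borel_measurable MY"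
proof -
  have "(\<lambda>y. (x, a, y)) \<in> measurable MY (MX \<Otimes>\<^sub>M (MA \<Otimes>\<^sub>M MY))"
    using assms by measurable
  from measurable_compose[OF this py_meas] show ?thesis
    by simp
qed

end

locale policy_model = outcome_model +
  fixes pol :: "'x \<Rightarrow> 'a \<Rightarrow> real"
  assumes pol_meas: "(\<lambda>(x, a). pol x a) \<in> borel_measurable (MX \<Otimes>\<^sub>M MA)"
    and pol_nonneg: "\<forall>x\<in>space MX. \<forall>a\<in>space MA. 0 \<le> pol x a"
    and pol_norm: "\<forall>x\<in>space MX. (\<integral>\<^sup>+ a. ennreal (pol x a) \<partial>MA) = 1"
begin

abbreviation joint :: "('x \<times> 'a \<times> real) measure" where
  "joint \<equiv> joint_meas MX MA MY p py pol"

definition joint_density :: "'x \<times> 'a \<Rightarrow> real \<Rightarrow> real" where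
  "joint_density xa y = py (fst xa) (snd xa) y * pol (fst xa) (snd xa) * p (fst xa)"

definition marginal :: "real \<Rightarrow> ennreal" where
  "marginal y = (\<integral>\<^sup>+xa. ennreal (joint_density xa y) \<partial>(MX \<Otimes>\<^sub>M MA))"

lemma y_marg_eq_marginal: "y_marg MX MA p py pol y = enn2real (marginal y)"
  by (simp add: y_marg_def marginal_def joint_density_def)

lemma measurable_joint_density [measurable]:
  "(\<lambda>(xa, y). joint_density xa y) \<in> borel_measurable ((MX \<Otimes>\<^sub>M MA) \<Otimes>\<^sub>M MY)"
proof -
  have "(\<lambda>(xa, y). (fst xa, snd xa, y))
      \<in> measurable ((MX \<Otimes>\<^sub>M MA) \<Otimes>\<^sub>M MY) (MX \<Otimes>\<^sub>M (MA \<Otimes>\<^sub>M MY))"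
    by measurable
  from measurable_compose[OF this py_meas]
  have [measurable]: "(\<lambda>(xa, y). py (fst xa) (snd xa) y) \<in> borel_measurable ((MX \<Otimes>\<^sub>M MA) \<Otimes>\<^sub>M MY)"
    by (simp add: split_beta')
  note pol_meas [measurable] p_meas [measurable]
  show ?thesis
    unfolding joint_density_def by measurable
qed

lemma joint_eq_density:
  "joint = density (MX \<Otimes>\<^sub>M (MA \<Otimes>\<^sub>M MY))
     (\<lambda>\<omega>. ennreal (joint_density (fst \<omega>, fst (snd \<omega>)) (snd (snd \<omega>))))"
  unfolding joint_meas_def joint_density_def by (simp add: split_beta')

lemma nn_integral_joint:
  assumes [measurable]: "g \<in> borel_measurable (MX \<Otimes>\<^sub>M (MA \<Otimes>\<^sub>M MY))"
  shows "(\<integral>\<^sup>+\<omega>. g \<omega> \<partial>joint)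
       = (\<integral>\<^sup>+y. \<integral>\<^sup>+xa. ennreal (joint_density xa y) * g (fst xa, snd xa, y) \<partial>(MX \<Otimes>\<^sub>M MA) \<partial>MY)"
  unfolding joint_eq_density
  by (subst nn_integral_density, measurable)
    (subst nn_integral_prod3_integrate_last[OF sfX sfA sfY]; simp)

lemma nn_integral_marginal: "(\<integral>\<^sup>+y. marginal y \<partial>MY) = 1"
proof -
  note pol_meas [measurable] p_meas [measurable]
  have "(\<integral>\<^sup>+y. marginal y \<partial>MY) = (\<integral>\<^sup>+xa. \<integral>\<^sup>+y. ennreal (joint_density xa y) \<partial>MY \<partial>(MX \<Otimes>\<^sub>M MA))"
    unfolding marginal_def by (rule XA_Y.Fubini') measurable
  also have "\<dots> = (\<integral>\<^sup>+xa. ennreal (pol (fst xa) (snd xa)) * ennreal (p (fst xa)) \<partial>(MX \<Otimes>\<^sub>M MA))"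
  proof (intro nn_integral_cong)
    fix xa assume xa: "xa \<in> space (MX \<Otimes>\<^sub>M MA)"
    then have x: "fst xa \<in> space MX" and a: "snd xa \<in> space MA"
      by (auto simp: space_pair_measure)
    have "(\<integral>\<^sup>+y. ennreal (joint_density xa y) \<partial>MY)
        = (\<integral>\<^sup>+y. ennreal (py (fst xa) (snd xa) y) * ennreal (pol (fst xa) (snd xa) * p (fst xa)) \<partial>MY)"
      using x a p_nonneg pol_nonneg
      by (intro nn_integral_cong) (simp add: joint_density_def ennreal_mult'' mult.assoc)
    also have "\<dots> = ennreal (pol (fst xa) (snd xa)) * ennreal (p (fst xa))"
      using x a measurable_py_outcome[OF x a] py_norm p_nonneg pol_nonneg
      by (simp add: nn_integral_multc ennreal_mult)
    finally show "(\<integral>\<^sup>+y. ennreal (joint_density xa y) \<partial>MY) = ennreal (pol (fst xa) (snd xa)) * ennreal (p (fst xa))" .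
  qed
  also have "\<dots> = (\<integral>\<^sup>+x. \<integral>\<^sup>+a. ennreal (pol x a) * ennreal (p x) \<partial>MA \<partial>MX)"
    using XA.M2.nn_integral_fst[where f="\<lambda>xa. ennreal (pol (fst xa) (snd xa)) * ennreal (p (fst xa))"]
    by simp
  also have "\<dots> = (\<integral>\<^sup>+x. \<integral>\<^sup>+a. ennreal (pol x a) \<partial>MA * ennreal (p x) \<partial>MX)"
    by (intro nn_integral_cong nn_integral_multc) measurable
  also have "\<dots> = 1"
    using pol_norm p_norm by (simp cong: nn_integral_cong)
  finally show ?thesis .
qed

lemma sets_joint [measurable_cong]: "sets joint = sets (MX \<Otimes>\<^sub>M (MA \<Otimes>\<^sub>M MY))"
  by (simp add: joint_eq_density)

lemma space_joint: "space joint = space (MX \<Otimes>\<^sub>M (MA \<Otimes>\<^sub>M MY))"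
  by (simp add: joint_eq_density)

lemma measurable_marginal [measurable]: "marginal \<in> borel_measurable MY"
  unfolding marginal_def by measurable

lemma nn_integral_joint_outcome:
  assumes [measurable]: "g \<in> borel_measurable MY"
  shows "(\<integral>\<^sup>+\<omega>. g (snd (snd \<omega>)) \<partial>joint) = (\<integral>\<^sup>+y. marginal y * g y \<partial>MY)"
proof -
  have "(\<integral>\<^sup>+\<omega>. g (snd (snd \<omega>)) \<partial>joint)
      = (\<integral>\<^sup>+y. \<integral>\<^sup>+xa. ennreal (joint_density xa y) * g y \<partial>(MX \<Otimes>\<^sub>M MA) \<partial>MY)"
    by (subst nn_integral_joint) simp_all
  also have "\<dots> = (\<integral>\<^sup>+y. marginal y * g y \<partial>MY)"
    unfolding marginal_def by (intro nn_integral_cong nn_integral_multc) measurable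
  finally show ?thesis .
qed

lemma prob_space_joint: "prob_space joint"
proof (rule prob_spaceI)
  have "emeasure joint (space joint) = (\<integral>\<^sup>+\<omega>. 1 \<partial>joint)"
    by simp
  also have "\<dots> = 1"
    using nn_integral_joint_outcome[of "\<lambda>_. 1"] nn_integral_marginal by simp
  finally show "emeasure joint (space joint) = 1" .
qed

lemma AE_marginal_finite: "AE y in MY. marginal y \<noteq> \<infinity>"
  using nn_integral_PInf_AE[OF measurable_marginal] nn_integral_marginal by simp

lemma distr_joint_outcome: "distr joint MY (\<lambda>\<omega>. snd (snd \<omega>)) = density MY marginal"
proof (rule measure_eqI)
  fix B assume "B \<in> sets (distr joint MY (\<lambda>\<omega>. snd (snd \<omega>)))"
  then have B [measurable]: "B \<in> sets MY"
    by simp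
  have "emeasure (distr joint MY (\<lambda>\<omega>. snd (snd \<omega>))) B
      = emeasure joint ((\<lambda>\<omega>. snd (snd \<omega>)) -` B \<inter> space joint)"
    by (rule emeasure_distr) measurable
  also have "\<dots> = (\<integral>\<^sup>+\<omega>. indicator ((\<lambda>\<omega>. snd (snd \<omega>)) -` B \<inter> space joint) \<omega> \<partial>joint)"
    by (rule nn_integral_indicator[symmetric]) measurable
  also have "\<dots> = (\<integral>\<^sup>+\<omega>. indicator B (snd (snd \<omega>)) \<partial>joint)"
    by (intro nn_integral_cong) (simp split: split_indicator)
  also have "\<dots> = emeasure (density MY marginal) B"
    using B by (simp add: nn_integral_joint_outcome emeasure_density)
  finally show "emeasure (distr joint MY (\<lambda>\<omega>. snd (snd \<omega>))) B = emeasure (density MY marginal) B" .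
qed simp

end

locale off_policy =
  behaviour: policy_model MX MA MY p py pib + target: policy_model MX MA MY p py pis
  for MX :: "'x measure" and MA :: "'a measure" and MY :: "real measure"
    and p :: "'x \<Rightarrow> real" and py :: "'x \<Rightarrow> 'a \<Rightarrow> real \<Rightarrow> real"
    and pib pis :: "'x \<Rightarrow> 'a \<Rightarrow> real" +
  assumes abs_cont: "\<forall>x\<in>space MX. \<forall>a\<in>space MA. pis x a > 0 \<longrightarrow> pib x a > 0"
begin

definition ratio :: "'x \<Rightarrow> 'a \<Rightarrow> real" where
  "ratio x a = pis x a / pib x a"

definition weight :: "real \<Rightarrow> real" where
  "weight y = y_marg MX MA p py pis y / y_marg MX MA p py pib y"

lemma weight_eq: "weight y = enn2real (target.marginal y) / enn2real (behaviour.marginal y)"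
  by (simp add: weight_def behaviour.y_marg_eq_marginal target.y_marg_eq_marginal)

lemma weight_nonneg: "0 \<le> weight y"
  by (simp add: weight_eq)

lemma measurable_weight [measurable]: "weight \<in> borel_measurable MY"
  unfolding weight_eq by measurable

lemma measurable_ratio [measurable]: "(\<lambda>(x, a). ratio x a) \<in> borel_measurable (MX \<Otimes>\<^sub>M MA)"
  using behaviour.pol_meas target.pol_meas unfolding ratio_def by measurable

lemma ratio_nonneg: "x \<in> space MX \<Longrightarrow> a \<in> space MA \<Longrightarrow> 0 \<le> ratio x a"
  using behaviour.pol_nonneg target.pol_nonneg by (simp add: ratio_def)

lemma joint_density_mult_ratio:
  assumes "xa \<in> space (MX \<Otimes>\<^sub>M MA)"
  shows "ennreal (behaviour.joint_density xa y) * ennreal (ratio (fst xa) (snd xa))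
       = ennreal (target.joint_density xa y)"
proof -
  obtain x a where xa: "xa = (x, a)" "x \<in> space MX" "a \<in> space MA"
    using assms by (auto simp: space_pair_measure)
  have "pib x a * ratio x a = pis x a"
    using abs_cont behaviour.pol_nonneg target.pol_nonneg xa
    by (cases "pib x a = 0") (force simp: ratio_def)+
  then have "behaviour.joint_density xa y * ratio x a = target.joint_density xa y"
    unfolding behaviour.joint_density_def target.joint_density_def xa(1)
    by (metis fst_conv snd_conv mult.commute mult.left_commute)
  then show ?thesis
    using ennreal_mult''[OF ratio_nonneg[OF xa(2,3)], of "behaviour.joint_density xa y"] xa(1)
    by simp
qed

lemma target_marginal_eq:
  "target.marginal y
     = (\<integral>\<^sup>+xa. ennreal (behaviour.joint_density xa y) * ennreal (ratio (fst xa) (snd xa)) \<partial>(MX \<Otimes>\<^sub>M MA))"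
  unfolding target.marginal_def by (intro nn_integral_cong) (simp add: joint_density_mult_ratio)

text \<open>Where the behaviour marginal vanishes, absolute continuity makes the target marginal vanish
  too, so the junk value \<open>weight y = 0\<close> of the division is harmless.\<close>

lemma weight_mult_marginal: "AE y in MY. ennreal (weight y) * behaviour.marginal y = target.marginal y"
  using behaviour.AE_marginal_finite target.AE_marginal_finite AE_space
proof eventually_elim
  case (elim y)
  show ?case
  proof (cases "behaviour.marginal y = 0")
    case True
    have "AE xa in MX \<Otimes>\<^sub>M MA. ennreal (behaviour.joint_density xa y) = 0"
      using True elim by (simp add: behaviour.marginal_def nn_integral_0_iff_AE)
    then have "target.marginal y = 0"
      using elim by (simp add: target_marginal_eq nn_integral_0_iff_AE eventually_mono)
    then show ?thesis
      using True by simp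
  next
    case False
    then have "enn2real (behaviour.marginal y) \<noteq> 0"
      using elim by (simp add: enn2real_eq_0_iff)
    then have w: "weight y * enn2real (behaviour.marginal y) = enn2real (target.marginal y)"
      by (simp add: weight_eq)
    have "ennreal (weight y) * behaviour.marginal y
        = ennreal (weight y) * ennreal (enn2real (behaviour.marginal y))"
      using elim by (simp add: ennreal_enn2real_if)
    also have "\<dots> = ennreal (enn2real (target.marginal y))"
      unfolding w[symmetric] by (rule ennreal_mult[symmetric]) (simp_all add: weight_nonneg)
    also have "\<dots> = target.marginal y"
      using elim by (simp add: ennreal_enn2real_if)
    finally show ?thesis .
  qed
qed

lemma nn_integral_ratio_outcome:
  assumes [measurable]: "g \<in> borel_measurable MY"
  shows "(\<integral>\<^sup>+\<omega>. g (snd (snd \<omega>)) * ennreal (ratio (fst \<omega>) (fst (snd \<omega>))) \<partial>behaviour.joint)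
       = (\<integral>\<^sup>+y. g y * target.marginal y \<partial>MY)"
proof -
  have "(\<integral>\<^sup>+\<omega>. g (snd (snd \<omega>)) * ennreal (ratio (fst \<omega>) (fst (snd \<omega>))) \<partial>behaviour.joint)
      = (\<integral>\<^sup>+y. \<integral>\<^sup>+xa. g y * (ennreal (behaviour.joint_density xa y) * ennreal (ratio (fst xa) (snd xa)))
           \<partial>(MX \<Otimes>\<^sub>M MA) \<partial>MY)"
    by (subst behaviour.nn_integral_joint) (simp_all add: ac_simps)
  also have "\<dots> = (\<integral>\<^sup>+y. g y * target.marginal y \<partial>MY)"
    by (intro nn_integral_cong) (simp add: target_marginal_eq nn_integral_cmult)
  finally show ?thesis .
qed

lemma nn_integral_weight_outcome:
  assumes [measurable]: "g \<in> borel_measurable MY"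
  shows "(\<integral>\<^sup>+\<omega>. g (snd (snd \<omega>)) * ennreal (weight (snd (snd \<omega>))) \<partial>behaviour.joint)
       = (\<integral>\<^sup>+y. g y * target.marginal y \<partial>MY)"
  unfolding behaviour.nn_integral_joint_outcome[of "\<lambda>y. g y * ennreal (weight y)", simplified]
  using weight_mult_marginal by (intro nn_integral_cong_AE) (auto elim!: eventually_mono simp: ac_simps)

lemma weight_eq_real_cond_exp:
  "AE \<omega> in behaviour.joint. weight (snd (snd \<omega>)) =
     real_cond_exp behaviour.joint (vimage_algebra (space behaviour.joint) (\<lambda>\<omega>. snd (snd \<omega>)) MY)
       (\<lambda>\<omega>. ratio (fst \<omega>) (fst (snd \<omega>))) \<omega>"
proof -
  interpret prob_space behaviour.joint
    by (rule behaviour.prob_space_joint)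
  have ratio_nonneg_joint: "AE \<omega> in behaviour.joint. 0 \<le> ratio (fst \<omega>) (fst (snd \<omega>))"
    by (intro AE_I2) (auto simp: behaviour.space_joint space_pair_measure ratio_nonneg)
  have "integrable behaviour.joint (\<lambda>\<omega>. ratio (fst \<omega>) (fst (snd \<omega>)))"
    using ratio_nonneg_joint nn_integral_ratio_outcome[of "\<lambda>_. 1"] target.nn_integral_marginal
    by (intro integrableI_nonneg) simp_all
  moreover have "integrable behaviour.joint (\<lambda>\<omega>. weight (snd (snd \<omega>)))"
    using nn_integral_weight_outcome[of "\<lambda>_. 1"] target.nn_integral_marginal
    by (intro integrableI_nonneg) (simp_all add: weight_nonneg)
  ultimately have "AE \<omega> in behaviour.joint.
     real_cond_exp behaviour.joint (vimage_algebra (space behaviour.joint) (\<lambda>\<omega>. snd (snd \<omega>)) MY)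
       (\<lambda>\<omega>. ratio (fst \<omega>) (fst (snd \<omega>))) \<omega> = weight (snd (snd \<omega>))"
    using ratio_nonneg_joint
    by (intro real_cond_exp_vimage_charact)
      (simp_all add: weight_nonneg nn_integral_ratio_outcome nn_integral_weight_outcome)
  then show ?thesis
    by (auto elim: eventually_mono)
qed

lemma conditional_square_deviation:
  assumes y [measurable]: "y \<in> space MY"
    and finite: "behaviour.marginal y \<noteq> \<infinity>" "target.marginal y \<noteq> \<infinity>"
    and weight: "ennreal (weight y) * behaviour.marginal y = target.marginal y"
  shows "(\<integral>\<^sup>+xa. ennreal (behaviour.joint_density xa y) * ennreal ((ratio (fst xa) (snd xa) - d)\<^sup>2) \<partial>(MX \<Otimes>\<^sub>M MA))
       = (\<integral>\<^sup>+xa. ennreal (behaviour.joint_density xa y) * ennreal ((ratio (fst xa) (snd xa) - weight y)\<^sup>2) \<partial>(MX \<Otimes>\<^sub>M MA))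
         + ennreal ((weight y - d)\<^sup>2) * behaviour.marginal y"
proof -
  define N where "N = density (MX \<Otimes>\<^sub>M MA) (\<lambda>xa. ennreal (behaviour.joint_density xa y))"
  define r where "r xa = ratio (fst xa) (snd xa)" for xa
  have [measurable]: "r \<in> borel_measurable (MX \<Otimes>\<^sub>M MA)"
    unfolding r_def by measurable
  then have [measurable]: "r \<in> borel_measurable N"
    by (simp add: N_def)
  have nn_integral_N: "(\<integral>\<^sup>+xa. h xa \<partial>N) = (\<integral>\<^sup>+xa. ennreal (behaviour.joint_density xa y) * h xa \<partial>(MX \<Otimes>\<^sub>M MA))"
    if [measurable]: "h \<in> borel_measurable (MX \<Otimes>\<^sub>M MA)" for h
    unfolding N_def by (rule nn_integral_density) measurable
  have emeasure_N: "emeasure N (space N) = behaviour.marginal y"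
    using nn_integral_N[of "\<lambda>_. 1"] by (simp add: behaviour.marginal_def)
  then have "finite_measure N"
    using finite by (intro finite_measureI) simp
  have measure_N: "measure N (space N) = enn2real (behaviour.marginal y)"
    using emeasure_N by (simp add: measure_def)
  have r_nonneg: "AE xa in N. 0 \<le> r xa"
    by (intro AE_I2) (auto simp: N_def r_def space_pair_measure ratio_nonneg)
  have nn_integral_r: "(\<integral>\<^sup>+xa. ennreal (r xa) \<partial>N) = target.marginal y"
    by (simp add: nn_integral_N r_def target_marginal_eq)
  have "integrable N r"
    using r_nonneg nn_integral_r finite by (intro integrableI_nonneg) (simp_all add: top.not_eq_extremum)
  moreover have "weight y * measure N (space N) = (\<integral>xa. r xa \<partial>N)"
  proof -
    have "weight y * enn2real (behaviour.marginal y) = enn2real (target.marginal y)"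
      unfolding weight[symmetric] using weight_nonneg by (simp add: enn2real_mult)
    then show ?thesis
      using r_nonneg nn_integral_r by (simp add: measure_N integral_eq_nn_integral)
  qed
  ultimately have "(\<integral>\<^sup>+xa. ennreal ((r xa - d)\<^sup>2) \<partial>N)
      = (\<integral>\<^sup>+xa. ennreal ((r xa - weight y)\<^sup>2) \<partial>N) + ennreal ((weight y - d)\<^sup>2 * measure N (space N))"
    by (rule nn_integral_square_deviation[OF \<open>finite_measure N\<close>])
  moreover have "ennreal ((weight y - d)\<^sup>2 * measure N (space N)) = ennreal ((weight y - d)\<^sup>2) * behaviour.marginal y"
    using finite by (simp add: measure_N ennreal_mult ennreal_enn2real_if)
  ultimately show ?thesis
    by (simp add: nn_integral_N r_def)
qed

lemma mse_decomposition:
  assumes [measurable]: "f \<in> borel_measurable MY"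
  shows "(\<integral>\<^sup>+\<omega>. ennreal ((ratio (fst \<omega>) (fst (snd \<omega>)) - f (snd (snd \<omega>)))\<^sup>2) \<partial>behaviour.joint)
       = (\<integral>\<^sup>+\<omega>. ennreal ((ratio (fst \<omega>) (fst (snd \<omega>)) - weight (snd (snd \<omega>)))\<^sup>2) \<partial>behaviour.joint)
         + (\<integral>\<^sup>+y. ennreal ((weight y - f y)\<^sup>2) * behaviour.marginal y \<partial>MY)"
proof -
  define sq where "sq g y = (\<integral>\<^sup>+xa. ennreal (behaviour.joint_density xa y)
      * ennreal ((ratio (fst xa) (snd xa) - g y)\<^sup>2) \<partial>(MX \<Otimes>\<^sub>M MA))" for g :: "real \<Rightarrow> real" and y
  have nn_integral_joint_sq: "(\<integral>\<^sup>+\<omega>. ennreal ((ratio (fst \<omega>) (fst (snd \<omega>)) - g (snd (snd \<omega>)))\<^sup>2) \<partial>behaviour.joint)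
      = (\<integral>\<^sup>+y. sq g y \<partial>MY)" if [measurable]: "g \<in> borel_measurable MY" for g
    unfolding sq_def by (subst behaviour.nn_integral_joint) simp_all
  have "AE y in MY. sq f y = sq weight y + ennreal ((weight y - f y)\<^sup>2) * behaviour.marginal y"
    using AE_space behaviour.AE_marginal_finite target.AE_marginal_finite weight_mult_marginal
    by eventually_elim (unfold sq_def, rule conditional_square_deviation)
  then have "(\<integral>\<^sup>+y. sq f y \<partial>MY)
      = (\<integral>\<^sup>+y. sq weight y + ennreal ((weight y - f y)\<^sup>2) * behaviour.marginal y \<partial>MY)"
    by (rule nn_integral_cong_AE)
  also have "\<dots> = (\<integral>\<^sup>+y. sq weight y \<partial>MY) + (\<integral>\<^sup>+y. ennreal ((weight y - f y)\<^sup>2) * behaviour.marginal y \<partial>MY)"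
    unfolding sq_def by (rule nn_integral_add) measurable
  finally show ?thesis
    unfolding nn_integral_joint_sq[OF assms] nn_integral_joint_sq[OF measurable_weight] .
qed

lemma mse_weight_minimal:
  assumes "f \<in> borel_measurable MY"
  shows "(\<integral>\<^sup>+\<omega>. ennreal ((ratio (fst \<omega>) (fst (snd \<omega>)) - weight (snd (snd \<omega>)))\<^sup>2) \<partial>behaviour.joint)
       \<le> (\<integral>\<^sup>+\<omega>. ennreal ((ratio (fst \<omega>) (fst (snd \<omega>)) - f (snd (snd \<omega>)))\<^sup>2) \<partial>behaviour.joint)"
  unfolding mse_decomposition[OF assms] by simp

lemma mse_minimizer_unique:
  assumes [measurable]: "f \<in> borel_measurable MY"
    and eq: "(\<integral>\<^sup>+\<omega>. ennreal ((ratio (fst \<omega>) (fst (snd \<omega>)) - f (snd (snd \<omega>)))\<^sup>2) \<partial>behaviour.joint)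
           = (\<integral>\<^sup>+\<omega>. ennreal ((ratio (fst \<omega>) (fst (snd \<omega>)) - weight (snd (snd \<omega>)))\<^sup>2) \<partial>behaviour.joint)"
    and finite: "(\<integral>\<^sup>+\<omega>. ennreal ((ratio (fst \<omega>) (fst (snd \<omega>)) - weight (snd (snd \<omega>)))\<^sup>2) \<partial>behaviour.joint) < \<infinity>"
  shows "AE \<omega> in behaviour.joint. f (snd (snd \<omega>)) = weight (snd (snd \<omega>))"
proof -
  have "(\<integral>\<^sup>+y. ennreal ((weight y - f y)\<^sup>2) * behaviour.marginal y \<partial>MY) = 0"
    using mse_decomposition[OF assms(1)] finite
    unfolding eq by (auto simp: ennreal_add_left_cancel[where c=0, simplified])
  then have "AE y in MY. ennreal ((weight y - f y)\<^sup>2) * behaviour.marginal y = 0"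
    by (subst (asm) nn_integral_0_iff_AE) simp_all
  then have "AE y in density MY behaviour.marginal. f y = weight y"
    by (subst AE_density) (auto elim!: eventually_mono)
  then show ?thesis
    unfolding behaviour.distr_joint_outcome [symmetric] by (subst (asm) AE_distr_iff) simp_all
qed

end

theorem lemma2p1:
  fixes MX :: "'x measure" and MA :: "'a measure" and MY :: "real measure"
    and p :: "'x \<Rightarrow> real" and py :: "'x \<Rightarrow> 'a \<Rightarrow> real \<Rightarrow> real"
    and pib pis :: "'x \<Rightarrow> 'a \<Rightarrow> real"
  assumes sfX: "sigma_finite_measure MX" and sfA: "sigma_finite_measure MA"
    and sfY: "sigma_finite_measure MY" and setsY: "sets MY = sets borel"
    and p_meas: "p \<in> borel_measurable MX"
    and p_nonneg: "\<forall>x\<in>space MX. 0 \<le> p x"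
    and p_norm: "(\<integral>\<^sup>+ x. ennreal (p x) \<partial>MX) = 1"
    and py_meas: "(\<lambda>(x, a, y). py x a y) \<in> borel_measurable (MX \<Otimes>\<^sub>M (MA \<Otimes>\<^sub>M MY))"
    and py_nonneg: "\<forall>x\<in>space MX. \<forall>a\<in>space MA. \<forall>y\<in>space MY. 0 \<le> py x a y"
    and py_norm: "\<forall>x\<in>space MX. \<forall>a\<in>space MA. (\<integral>\<^sup>+ y. ennreal (py x a y) \<partial>MY) = 1"
    and pib_meas: "(\<lambda>(x, a). pib x a) \<in> borel_measurable (MX \<Otimes>\<^sub>M MA)"
    and pib_nonneg: "\<forall>x\<in>space MX. \<forall>a\<in>space MA. 0 \<le> pib x a"
    and pib_norm: "\<forall>x\<in>space MX. (\<integral>\<^sup>+ a. ennreal (pib x a) \<partial>MA) = 1"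
    and pis_meas: "(\<lambda>(x, a). pis x a) \<in> borel_measurable (MX \<Otimes>\<^sub>M MA)"
    and pis_nonneg: "\<forall>x\<in>space MX. \<forall>a\<in>space MA. 0 \<le> pis x a"
    and pis_norm: "\<forall>x\<in>space MX. (\<integral>\<^sup>+ a. ennreal (pis x a) \<partial>MA) = 1"
    and abs_cont: "\<forall>x\<in>space MX. \<forall>a\<in>space MA. pis x a > 0 \<longrightarrow> pib x a > 0"
  defines "Pb \<equiv> joint_meas MX MA MY p py pib"
    and "w \<equiv> (\<lambda>y. y_marg MX MA p py pis y / y_marg MX MA p py pib y)"
    and "rho \<equiv> (\<lambda>a x. pis x a / pib x a)"
  shows "(AE \<omega> in Pb. w (snd (snd \<omega>)) =
            real_cond_exp Pb (vimage_algebra (space Pb) (\<lambda>\<omega>. snd (snd \<omega>)) MY)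
              (\<lambda>\<omega>. rho (fst (snd \<omega>)) (fst \<omega>)) \<omega>)
       \<and> (\<forall>f \<in> borel_measurable MY.
            (\<integral>\<^sup>+ \<omega>. ennreal ((rho (fst (snd \<omega>)) (fst \<omega>) - w (snd (snd \<omega>)))\<^sup>2) \<partial>Pb)
            \<le> (\<integral>\<^sup>+ \<omega>. ennreal ((rho (fst (snd \<omega>)) (fst \<omega>) - f (snd (snd \<omega>)))\<^sup>2) \<partial>Pb))
       \<and> (\<forall>f \<in> borel_measurable MY.
            (\<integral>\<^sup>+ \<omega>. ennreal ((rho (fst (snd \<omega>)) (fst \<omega>) - f (snd (snd \<omega>)))\<^sup>2) \<partial>Pb)
              = (\<integral>\<^sup>+ \<omega>. ennreal ((rho (fst (snd \<omega>)) (fst \<omega>) - w (snd (snd \<omega>)))\<^sup>2) \<partial>Pb)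
            \<and> (\<integral>\<^sup>+ \<omega>. ennreal ((rho (fst (snd \<omega>)) (fst \<omega>) - w (snd (snd \<omega>)))\<^sup>2) \<partial>Pb) < \<infinity>
            \<longrightarrow> (AE \<omega> in Pb. f (snd (snd \<omega>)) = w (snd (snd \<omega>))))"
proof -
  interpret off_policy MX MA MY p py pib pis
    using sfX sfA sfY p_meas p_nonneg p_norm py_meas py_nonneg py_norm
      pib_meas pib_nonneg pib_norm pis_meas pis_nonneg pis_norm abs_cont
    by (simp add: off_policy_def off_policy_axioms_def policy_model_def policy_model_axioms_def
        outcome_model_def)
  have "Pb = behaviour.joint" and "w = weight" and "rho = (\<lambda>a x. ratio x a)"
    unfolding Pb_def w_def weight_def rho_def ratio_def by simp_all
  then show ?thesis
    using weight_eq_real_cond_exp mse_weight_minimal mse_minimizer_unique by blast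
qed

end
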